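(* Let $\sigma$ be irrational and $\rho\in\mathbb R$, and let $b[n]=\{\sigma n+\rho\}$ for $n\ge0$, where $\{\cdot\}$ denotes the fractional part. Then $(b[n])_{n\ge0}$ is a canonical sequence (so the permutation it represents is ergodic), and it is a fixed point of the morphism $[0,1]^*\to[0,1]^*$ defined on single numbers by $x\mapsto \{2x-\rho\},\{2x-\rho+\sigma\}$ and extended by concatenation.
   Context: A real sequence $(a[i])_{i\ge0}$ is canonical if its elements are pairwise distinct, lie in $[0,1]$, and for every $t\in[0,1]$, $\#\{0\le k<n: a[j+k]<t\}/n\to t$ as $n\to\infty$ uniformly in $j$. An infinite permutation is an equivalence class of real sequences with pairwise distinct elements under $(a[n])\sim(b[n])$ iff $a[i]<a[j]\Leftrightarrow b[i]<b[j]$ for all $i,j$; it is ergodic if it has a canonical representative. A fixed point of a morphism $\psi$ on sequences of numbers is an infinite sequence $s$ with $\psi(s)=s$, where $\psi$ acts on an infinite sequence by concatenating the images of its terms. *)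

theory Defs
  imports Complex_Main
begin

definition canonical :: "(nat \<Rightarrow> real) \<Rightarrow> bool" where
  "canonical a \<longleftrightarrow>
     inj a \<and> (\<forall>i. a i \<in> {0..1}) \<and>
     (\<forall>t\<in>{0..1}. \<forall>\<epsilon>>0. \<exists>N. \<forall>n\<ge>N. \<forall>j.
        \<bar>real (card {k. k < n \<and> a (j + k) < t}) / real n - t\<bar> < \<epsilon>)"

text \<open>Action of a morphism (given on single letters by a finite word) on an infinite
  sequence: concatenation of the images of its terms.\<close>
definition morph_apply :: "('a \<Rightarrow> 'a list) \<Rightarrow> (nat \<Rightarrow> 'a) \<Rightarrow> (nat \<Rightarrow> 'a)" where
  "morph_apply \<psi> s i =
     (let L = (\<lambda>n. \<Sum>k<n. length (\<psi> (s k)));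
          n = (LEAST n. i < L (Suc n))
      in \<psi> (s n) ! (i - L n))"

definition is_fixed_point :: "('a \<Rightarrow> 'a list) \<Rightarrow> (nat \<Rightarrow> 'a) \<Rightarrow> bool" where
  "is_fixed_point \<psi> s \<longleftrightarrow> morph_apply \<psi> s = s"

end

theory Submission
  imports Defs "HOL-Analysis.Kronecker_Approximation_Theorem"
begin

text \<open>The fixed-point property is the identity \<open>{2{x} + c} = {2x + c}\<close> applied at positions
  \<open>2m\<close> and \<open>2m+1\<close>. Distinctness follows from irrationality. For the uniform frequencies,
  Kronecker's theorem gives \<open>q\<close> with \<open>{q\<sigma>} = \<eta>\<close> small and positive; splitting a window by
  residues mod \<open>q\<close> turns it, mod 1, into \<open>q\<close> arithmetic progressions of step \<open>\<eta>\<close>, and a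
  progression of small step visits \<open>[0,t)\<close> with frequency \<open>t\<close> up to an error independent of
  its starting point.\<close>

definition frac_below :: "real \<Rightarrow> real \<Rightarrow> real" where
  "frac_below t z = (if frac z < t then 1 else 0)"

lemma frac_below_nonneg: "0 \<le> frac_below t z"
  and frac_below_le_one: "frac_below t z \<le> 1"
  by (auto simp: frac_below_def)

lemma frac_below_add_of_int [simp]: "frac_below t (z + of_int m) = frac_below t z"
  by (simp add: frac_below_def)

lemma frac_diff_eq:
  assumes "0 \<le> s" "s \<le> 1"
  shows "frac (w - s) = frac w - s + frac_below s w"
proof -
  have "\<lfloor>w - s\<rfloor> = \<lfloor>w\<rfloor> - (if frac w < s then 1 else 0)"
    unfolding floor_eq_iff using assms frac_ge_0[of w] frac_lt_1[of w]
    by (simp add: frac_def) linarith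
  then show ?thesis by (simp add: frac_def frac_below_def)
qed

lemma sum_diff_shift_abs_le:
  fixes g :: "nat \<Rightarrow> real"
  assumes "\<And>i. g i \<in> {0..<1}"
  shows "\<bar>\<Sum>i<N. g i - g (i + p)\<bar> \<le> real p"
proof (induction p)
  case (Suc p)
  have "(\<Sum>i<N. g i - g (i + Suc p))
      = (\<Sum>i<N. g i - g (i + p)) + (\<Sum>i<N. g (i + p) - g (Suc i + p))"
    by (simp flip: sum.distrib)
  also have "(\<Sum>i<N. g (i + p) - g (Suc i + p)) = g p - g (N + p)"
    using sum_lessThan_telescope'[of "\<lambda>i. g (i + p)" N] by simp
  moreover have "\<bar>g p - g (N + p)\<bar> \<le> 1" using assms[of p] assms[of "N + p"] by auto
  ultimately show ?case using Suc.IH by linarith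
qed simp

lemma sum_frac_below_progression_le:
  assumes "0 < \<eta>" "r \<le> \<eta>"
  shows "(\<Sum>i<N. frac_below r (w + real i * \<eta>)) \<le> real N * \<eta> + 1"
proof -
  define G where "G i = real_of_int \<lfloor>w + real i * \<eta> - \<eta>\<rfloor>" for i :: nat
  \<comment> \<open>a term below \<open>r \<le> \<eta>\<close> means the progression has just crossed an integer\<close>
  have "frac_below r x \<le> of_int (\<lfloor>x\<rfloor> - \<lfloor>x - \<eta>\<rfloor>)" for x
  proof (cases "frac x < r")
    case True
    then have "x - \<eta> < of_int \<lfloor>x\<rfloor>" using assms by (simp add: frac_def)
    then have "\<lfloor>x - \<eta>\<rfloor> < \<lfloor>x\<rfloor>" by (simp add: floor_less_iff)
    then show ?thesis using True by (simp add: frac_below_def)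
  next
    case False
    then show ?thesis using assms by (simp add: frac_below_def floor_mono)
  qed
  then have "frac_below r (w + real i * \<eta>) \<le> G (Suc i) - G i" for i
    by (simp add: G_def algebra_simps)
  then have "(\<Sum>i<N. frac_below r (w + real i * \<eta>)) \<le> (\<Sum>i<N. G (Suc i) - G i)"
    by (intro sum_mono)
  also have "\<dots> = G N - G 0" by (rule sum_lessThan_telescope)
  also have "\<dots> \<le> real N * \<eta> + 1"
    unfolding G_def using of_int_floor_le[of "w + real N * \<eta> - \<eta>"] real_of_int_floor_gt_diff_one[of "w - \<eta>"]
    by (simp add: algebra_simps)
  finally show ?thesis .
qed

lemma sum_frac_below_progression_discrepancy:
  assumes "0 < \<eta>" "0 \<le> t" "t \<le> 1"
  shows "\<bar>(\<Sum>i<N. frac_below t (y + real i * \<eta>)) - t * real N\<bar> \<le> 1 / \<eta> + 2 * real N * \<eta> + 1"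
proof -
  \<comment> \<open>write \<open>t = p \<eta> + r\<close> with \<open>0 \<le> r < \<eta>\<close>; shifting the progression back by \<open>p\<close> steps
    trades the threshold \<open>t\<close> for the threshold \<open>r\<close>\<close>
  define p where "p = nat \<lfloor>t / \<eta>\<rfloor>"
  define r where "r = t - real p * \<eta>"
  have "real p = of_int \<lfloor>t / \<eta>\<rfloor>" unfolding p_def using assms by simp
  then have "real p \<le> t / \<eta>" "t / \<eta> < real p + 1" by linarith+
  then have r: "0 \<le> r" "r < \<eta>" "r \<le> t" and p: "real p \<le> 1 / \<eta>"
    using assms by (auto simp: r_def field_simps)
  define z where "z i = y + real i * \<eta>" for i :: nat
  define w where "w i = y - real p * \<eta> + real i * \<eta>" for i :: nat
  have step: "frac_below t (z i) - t = frac_below r (w i) - r + (frac (w i) - frac (w (i + p)))"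
    for i
  proof -
    have "z i - t = w i - r" "z i = w (i + p)" by (simp_all add: z_def w_def r_def algebra_simps)
    then show ?thesis
      using frac_diff_eq[of t "z i"] frac_diff_eq[of r "w i"] assms r by simp
  qed
  have "(\<Sum>i<N. frac_below t (z i)) - t * real N = (\<Sum>i<N. frac_below t (z i) - t)"
    by (simp add: sum_subtractf)
  also have "\<dots> = (\<Sum>i<N. frac_below r (w i)) - r * real N
      + (\<Sum>i<N. frac (w i) - frac (w (i + p)))"
    by (simp add: step sum.distrib sum_subtractf)
  finally have "(\<Sum>i<N. frac_below t (z i)) - t * real N = \<dots>" .
  moreover have "\<bar>\<Sum>i<N. frac (w i) - frac (w (i + p))\<bar> \<le> real p"
    by (rule sum_diff_shift_abs_le) (simp add: frac_lt_1)
  moreover have "0 \<le> (\<Sum>i<N. frac_below r (w i))"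
    by (intro sum_nonneg frac_below_nonneg)
  moreover have "(\<Sum>i<N. frac_below r (w i)) \<le> real N * \<eta> + 1"
    unfolding w_def using sum_frac_below_progression_le assms r by simp
  moreover have "0 \<le> r * real N" "r * real N \<le> \<eta> * real N"
    using r by (auto intro: mult_right_mono)
  ultimately show ?thesis using p unfolding z_def by (simp add: algebra_simps)
qed

lemma sum_lessThan_add_nat:
  fixes f :: "nat \<Rightarrow> 'a :: comm_monoid_add"
  shows "(\<Sum>k<a + b. f k) = (\<Sum>k<a. f k) + (\<Sum>k<b. f (a + k))"
  by (induction b) (simp_all add: add.assoc)

lemma sum_lessThan_mult_regroup:
  fixes f :: "nat \<Rightarrow> 'a :: comm_monoid_add"
  shows "(\<Sum>k<q * M. f k) = (\<Sum>r<q. \<Sum>i<M. f (r + q * i))"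
proof (induction M)
  case (Suc M)
  have "(\<Sum>k<q * Suc M. f k) = (\<Sum>k<q * M. f k) + (\<Sum>r<q. f (r + q * M))"
    using sum_lessThan_add_nat[of f "q * M" q] by (simp add: add.commute)
  then show ?case by (simp add: Suc.IH sum.distrib)
qed simp

lemma sum_frac_below_orbit_discrepancy:
  assumes "0 < q" and \<eta>: "\<eta> = frac (real q * \<sigma>)" "0 < \<eta>" and t: "0 \<le> t" "t \<le> 1"
  shows "\<bar>(\<Sum>k<n. frac_below t (x + real k * \<sigma>)) - t * real n\<bar>
           \<le> real q / \<eta> + 2 * real q + 2 * real n * \<eta>"
proof -
  define f where "f k = frac_below t (x + real k * \<sigma>)" for k
  define M where "M = n div q"
  define s where "s = n mod q"
  have n: "n = q * M + s" and "s < q" using \<open>0 < q\<close> by (simp_all add: M_def s_def)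
  \<comment> \<open>along each residue class mod \<open>q\<close> the orbit is, mod 1, a progression of step \<open>\<eta>\<close>\<close>
  have "f (r + q * i) = frac_below t (x + real r * \<sigma> + real i * \<eta>)" for r i
  proof -
    have "x + real (r + q * i) * \<sigma>
        = x + real r * \<sigma> + real i * \<eta> + of_int (int i * \<lfloor>real q * \<sigma>\<rfloor>)"
      by (simp add: \<eta> frac_def algebra_simps)
    then show ?thesis by (simp only: f_def frac_below_add_of_int)
  qed
  then have split: "(\<Sum>k<n. f k)
      = (\<Sum>r<q. \<Sum>i<M. frac_below t (x + real r * \<sigma> + real i * \<eta>)) + (\<Sum>k<s. f (q * M + k))"
    by (simp add: n sum_lessThan_add_nat sum_lessThan_mult_regroup)
  have "\<bar>(\<Sum>r<q. \<Sum>i<M. frac_below t (x + real r * \<sigma> + real i * \<eta>)) - t * real (q * M)\<bar>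
      = \<bar>\<Sum>r<q. (\<Sum>i<M. frac_below t (x + real r * \<sigma> + real i * \<eta>)) - t * real M\<bar>"
    by (simp add: sum_subtractf algebra_simps)
  also have "\<dots> \<le> (\<Sum>r<q. \<bar>(\<Sum>i<M. frac_below t (x + real r * \<sigma> + real i * \<eta>)) - t * real M\<bar>)"
    by (rule sum_abs)
  also have "\<dots> \<le> (\<Sum>r<q. 1 / \<eta> + 2 * real M * \<eta> + 1)"
    by (intro sum_mono sum_frac_below_progression_discrepancy \<eta> t)
  also have "\<dots> \<le> real q / \<eta> + 2 * real n * \<eta> + real q"
    using \<eta> by (simp add: n algebra_simps)
  finally have main: "\<bar>(\<Sum>r<q. \<Sum>i<M. frac_below t (x + real r * \<sigma> + real i * \<eta>))
      - t * real (q * M)\<bar> \<le> real q / \<eta> + 2 * real n * \<eta> + real q" .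
  have "0 \<le> (\<Sum>k<s. f (q * M + k))" "(\<Sum>k<s. f (q * M + k)) \<le> real s"
    using sum_mono[of "{..<s}" "\<lambda>k. f (q * M + k)" "\<lambda>_. 1"]
    by (simp_all add: f_def sum_nonneg frac_below_nonneg frac_below_le_one)
  moreover have "0 \<le> t * real s" "t * real s \<le> real s" using t by (simp_all add: mult_left_le_one_le)
  ultimately show ?thesis
    using main \<open>s < q\<close> unfolding f_def[symmetric] split by (simp add: n algebra_simps)
qed

lemma frac_below_orbit_frequency_uniform:
  assumes "\<sigma> \<notin> \<rat>" and t: "0 \<le> t" "t \<le> 1" and "0 < \<epsilon>"
  shows "\<exists>N. \<forall>n\<ge>N. \<forall>x. \<bar>(\<Sum>k<n. frac_below t (x + real k * \<sigma>)) / real n - t\<bar> < \<epsilon>"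
proof -
  define d where "d = min (\<epsilon> / 8) (1 / 2)"
  have d: "0 < d" "d \<le> 1" "d \<le> \<epsilon> / 8" using \<open>0 < \<epsilon>\<close> by (auto simp: d_def)
  then obtain q where "0 < q" and q: "\<bar>frac (real q * \<sigma>) - d\<bar> < d"
    using Kronecker_approx_1_explicit[OF \<open>\<sigma> \<notin> \<rat>\<close>, of d d] by auto
  define \<eta> where "\<eta> = frac (real q * \<sigma>)"
  have \<eta>: "0 < \<eta>" "\<eta> < \<epsilon> / 4" using q d unfolding \<eta>_def by linarith+
  define C where "C = real q / \<eta> + 2 * real q"
  obtain N :: nat where N: "2 * C / \<epsilon> < real N" using reals_Archimedean2 by blast
  have "\<bar>(\<Sum>k<n. frac_below t (x + real k * \<sigma>)) / real n - t\<bar> < \<epsilon>" if "N < n" for n x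
  proof -
    have "2 * C < \<epsilon> * real N" using N \<open>0 < \<epsilon>\<close> by (simp add: field_simps)
    also have "\<dots> \<le> \<epsilon> * real n" using that \<open>0 < \<epsilon>\<close> by simp
    finally have n: "0 < real n" "2 * C < \<epsilon> * real n" using that by simp_all
    have "\<bar>(\<Sum>k<n. frac_below t (x + real k * \<sigma>)) / real n - t\<bar>
        = \<bar>(\<Sum>k<n. frac_below t (x + real k * \<sigma>)) - t * real n\<bar> / real n"
      using n by (simp add: field_simps)
    also have "\<dots> \<le> (C + 2 * real n * \<eta>) / real n"
      using sum_frac_below_orbit_discrepancy[OF \<open>0 < q\<close> \<eta>_def \<open>0 < \<eta>\<close> t] n
      by (simp add: C_def divide_right_mono algebra_simps)
    also have "\<dots> = C / real n + 2 * \<eta>" using n by (simp add: field_simps)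
    also have "\<dots> < \<epsilon>"
    proof -
      have "C / real n < \<epsilon> / 2" using n by (simp add: field_simps)
      then show ?thesis using \<eta> by linarith
    qed
    finally show ?thesis .
  qed
  then show ?thesis by (meson Suc_le_eq)
qed

lemma sum_frac_below_eq_card:
  fixes n :: nat
  shows "(\<Sum>k<n. frac_below t (x k)) = real (card {k. k < n \<and> frac (x k) < t})"
proof -
  have "(\<Sum>k<n. frac_below t (x k)) = (\<Sum>k<n. of_bool (frac (x k) < t))"
    by (simp add: frac_below_def of_bool_def)
  also have "\<dots> = real (card ({..<n} \<inter> {k. frac (x k) < t}))" by simp
  also have "{..<n} \<inter> {k. frac (x k) < t} = {k. k < n \<and> frac (x k) < t}" by auto
  finally show ?thesis .
qed

lemma inj_frac_irrational_orbit:
  assumes "\<sigma> \<notin> \<rat>"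
  shows "inj (\<lambda>n::nat. frac (\<sigma> * real n + \<rho>))"
proof (rule injI)
  fix m n :: nat
  assume "frac (\<sigma> * real m + \<rho>) = frac (\<sigma> * real n + \<rho>)"
  then have "\<sigma> * (real m - real n) = of_int (\<lfloor>\<sigma> * real m + \<rho>\<rfloor> - \<lfloor>\<sigma> * real n + \<rho>\<rfloor>)"
    by (simp add: frac_def algebra_simps)
  then have "\<sigma> * (real m - real n) \<in> \<int>" by simp
  show "m = n"
  proof (rule ccontr)
    assume "m \<noteq> n"
    then have "\<sigma> = \<sigma> * (real m - real n) / (real m - real n)" by simp
    also have "\<dots> \<in> \<rat>"
      using \<open>\<sigma> * (real m - real n) \<in> \<int>\<close> Ints_subset_Rats by (intro Rats_divide) auto
    finally show False using assms by simp
  qed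
qed

lemma canonical_frac_irrational_orbit:
  assumes "\<sigma> \<notin> \<rat>"
  shows "canonical (\<lambda>n. frac (\<sigma> * real n + \<rho>))"
  unfolding canonical_def
proof (intro conjI ballI allI impI)
  show "inj (\<lambda>n. frac (\<sigma> * real n + \<rho>))" using assms by (rule inj_frac_irrational_orbit)
  show "frac (\<sigma> * real i + \<rho>) \<in> {0..1}" for i by (simp add: less_imp_le[OF frac_lt_1])
  fix t \<epsilon> :: real
  assume "t \<in> {0..1}" "0 < \<epsilon>"
  then obtain N where N: "\<And>n x. N \<le> n
      \<Longrightarrow> \<bar>(\<Sum>k<n. frac_below t (x + real k * \<sigma>)) / real n - t\<bar> < \<epsilon>"
    using frac_below_orbit_frequency_uniform[OF assms] by fastforce
  have "real (card {k. k < n \<and> frac (\<sigma> * real (j + k) + \<rho>) < t})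
      = (\<Sum>k<n. frac_below t ((\<sigma> * real j + \<rho>) + real k * \<sigma>))" for n j
    by (simp add: sum_frac_below_eq_card algebra_simps)
  with N show "\<exists>N. \<forall>n\<ge>N. \<forall>j.
      \<bar>real (card {k. k < n \<and> frac (\<sigma> * real (j + k) + \<rho>) < t}) / real n - t\<bar> < \<epsilon>"
    by (intro exI[of _ N]) presburger
qed

lemma morph_apply_uniform_length:
  assumes "\<And>x. length (\<psi> x) = m" and "0 < m"
  shows "morph_apply \<psi> s i = \<psi> (s (i div m)) ! (i mod m)"
proof -
  have "(LEAST n. i < Suc n * m) = i div m"
  proof (rule Least_equality)
    show "i < Suc (i div m) * m"
      using div_less_iff_less_mult[OF \<open>0 < m\<close>] by blast
    show "i div m \<le> n" if "i < Suc n * m" for n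
      using that div_less_iff_less_mult[OF \<open>0 < m\<close>] less_Suc_eq_le by blast
  qed
  then show ?thesis by (simp add: morph_apply_def assms(1) minus_div_mult_eq_mod)
qed

lemma frac_orbit_fixed_point:
  "is_fixed_point (\<lambda>x. [frac (2 * x - \<rho>), frac (2 * x - \<rho> + \<sigma>)]) (\<lambda>n. frac (\<sigma> * real n + \<rho>))"
  unfolding is_fixed_point_def
proof
  fix i :: nat
  define \<psi> where "\<psi> x = [frac (2 * x - \<rho>), frac (2 * x - \<rho> + \<sigma>)]" for x
  define b where "b n = frac (\<sigma> * real n + \<rho>)" for n
  have frac_double: "frac (2 * frac a - \<rho> + c) = frac (2 * a - \<rho> + c)" for a c
  proof -
    have "2 * frac a - \<rho> + c = 2 * a - \<rho> + c + of_int (- 2 * \<lfloor>a\<rfloor>)" by (simp add: frac_def)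
    then show ?thesis by (simp only: frac_add_of_int_right)
  qed
  have "real i = 2 * real (i div 2) + real (i mod 2)"
    by (metis div_mult_mod_eq mult.commute of_nat_add of_nat_mult of_nat_numeral)
  then have b_i: "b i = frac (2 * (\<sigma> * real (i div 2) + \<rho>) - \<rho> + real (i mod 2) * \<sigma>)"
    by (simp add: b_def algebra_simps)
  have "morph_apply \<psi> b i = \<psi> (b (i div 2)) ! (i mod 2)"
    by (rule morph_apply_uniform_length) (simp_all add: \<psi>_def)
  also have "\<dots> = frac (2 * b (i div 2) - \<rho> + real (i mod 2) * \<sigma>)"
    by (cases "even i") (simp_all add: \<psi>_def odd_iff_mod_2_eq_one)
  also have "\<dots> = b i" by (subst b_i) (simp only: b_def frac_double)
  finally show "morph_apply \<psi> b i = b i" .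
qed

theorem mainTheorem7:
  fixes \<sigma> \<rho> :: real
  assumes "\<sigma> \<notin> \<rat>"
  defines "b \<equiv> (\<lambda>n::nat. frac (\<sigma> * real n + \<rho>))"
  shows "canonical b \<and>
         is_fixed_point (\<lambda>x. [frac (2 * x - \<rho>), frac (2 * x - \<rho> + \<sigma>)]) b"
  unfolding b_def using canonical_frac_irrational_orbit[OF assms(1)] frac_orbit_fixed_point by blast

end
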